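(* Let $N>1$ be an integer and let $C_1,C_2>0$. For $0<y\le 1$, coprime integers $p,q$ with $q\ge1$ and $0<p/q\le 1$, and real $\delta$, define \[ T_y=\frac{1}{q\,(y+2i\delta)^{1/2}}\sum_{m=-\infty}^{\infty} S\!\left(\frac{p}{q},\frac{m}{q}\right)\exp\!\left(-\frac{\pi}{y+2i\delta}\Big(\frac{m}{q}-\frac{1}{N}\Big)^2\right), \qquad S\!\left(\frac{p}{q},t\right)=\sum_{\ell=1}^{q}e^{2\pi i\left(\frac{p}{q}\ell^2+t\ell\right)}. \] Then there is a constant $C$ (independent of $y,p,q,\delta$) such that whenever $q\le C_1 y^{-1/2}$ and $q|\delta|\le C_2 y^{1/2}$ (so that $x=p/q+\delta$ is close to $p/q$): if $N\mid q$, then \[ \left|T_y-S\!\left(\frac{p}{q},\frac{1}{N}\right)\frac{1}{q\,(y+2i\delta)^{1/2}}\right|\le C\,y^{-1/4}; \] and if $N\nmid q$, then $|T_y|\le C\,y^{-1/4}$.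
   Context: $(y+2i\delta)^{1/2}$ denotes the principal branch of the square root (the argument $y+2i\delta$ lies in the right half-plane). *)

theory Defs
  imports "HOL-Analysis.Analysis"
begin

definition gauss_S :: "int \<Rightarrow> int \<Rightarrow> real \<Rightarrow> complex" where
  "gauss_S p q t = (\<Sum>l=1..q. exp (2 * pi * \<i> *
      complex_of_real ((real_of_int p / real_of_int q) * (real_of_int l)^2 + t * real_of_int l)))"

text \<open>T_y; csqrt is the principal branch of the square root; the sum over m in Z is
  an (absolutely convergent) infinite sum over the integers.\<close>
definition T_y :: "nat \<Rightarrow> real \<Rightarrow> int \<Rightarrow> int \<Rightarrow> real \<Rightarrow> complex" where
  "T_y N y p q \<delta> =
     1 / (of_int q * csqrt (complex_of_real y + 2 * \<i> * complex_of_real \<delta>)) *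
     infsum (\<lambda>m::int. gauss_S p q (real_of_int m / real_of_int q) *
        exp (- (complex_of_real pi / (complex_of_real y + 2 * \<i> * complex_of_real \<delta>)) *
             complex_of_real ((real_of_int m / real_of_int q - 1 / real N)^2))) UNIV"

end

theory Submission
  imports Defs
begin

(* For coprime p, q the Gauss sums satisfy |S(p/q, m/q)| <= sqrt (2 q): expanding |S|^2 and
  using the q-periodicity of the summand in l leaves, for each shift h, a geometric sum of
  e(2 p h j / q) over j, which vanishes unless q divides 2 h, i.e. for all but at most two h.

  Write z = y + 2 i delta. The Gaussian factor of the m-th term has modulus exp (- B k^2) with
  k = m N - q and B = Re (pi / z) / (q N)^2. The term k = 0 occurs only if N divides q, and it is
  exactly S(p/q, 1/N). Bounding exp (- B k^2) <= exp (- B |k|) and summing the geometric series,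
  the remaining terms contribute at most sqrt (2 q) * 2 / B = 2 sqrt 2 q^(1/2) (q N |z|)^2 / (pi y);
  after division by q |z|^(1/2) this is 2 sqrt 2 N^2 / pi * (q |z|)^(3/2) / y, and the hypotheses
  give q |z| <= (C1 + 2 C2) y^(1/2). *)

definition e2pi :: "real \<Rightarrow> complex" where
  "e2pi x = exp (2 * pi * \<i> * complex_of_real x)"

lemma e2pi_add: "e2pi (x + y) = e2pi x * e2pi y"
  unfolding e2pi_def by (simp add: distrib_left exp_add)

lemma e2pi_of_int [simp]: "e2pi (of_int k) = 1"
  unfolding e2pi_def exp_eq_1 by (auto intro!: exI[of _ k])

lemma norm_e2pi [simp]: "norm (e2pi x) = 1"
  unfolding e2pi_def by simp

lemma cnj_e2pi: "cnj (e2pi x) = e2pi (- x)"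
  unfolding e2pi_def by (simp add: exp_cnj)

lemma e2pi_power: "e2pi x ^ n = e2pi (real n * x)"
  unfolding e2pi_def by (simp add: exp_of_nat_mult[symmetric] mult_ac)

lemma e2pi_eq_1_iff: "e2pi x = 1 \<longleftrightarrow> x \<in> \<int>"
proof
  assume "e2pi x = 1"
  then have "exp (complex_of_real (2 * pi * x) * \<i>) = 1"
    unfolding e2pi_def by (simp add: mult_ac)
  then obtain k :: int where "2 * pi * x = of_int (2 * k) * pi"
    unfolding exp_eq_1 by auto
  then show "x \<in> \<int>" by simp
qed (auto elim: Ints_cases)

lemma sum_e2pi_linear:
  fixes a :: int and n :: nat
  assumes "n > 0"
  shows "(\<Sum>j<n. e2pi (real j * (of_int a / n))) = (if int n dvd a then of_nat n else 0)"
proof -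
  define \<zeta> where "\<zeta> = e2pi (of_int a / n)"
  have "\<zeta> ^ n = 1"
    using assms by (simp add: \<zeta>_def e2pi_power)
  moreover have "\<zeta> = 1 \<longleftrightarrow> int n dvd a"
    using assms of_int_div_of_int_in_Ints_iff[of a "int n"] by (simp add: \<zeta>_def e2pi_eq_1_iff)
  moreover have "(\<Sum>j<n. e2pi (real j * (of_int a / n))) = (\<Sum>j<n. \<zeta> ^ j)"
    by (simp add: \<zeta>_def e2pi_power)
  ultimately show ?thesis
    by (simp add: sum_gp_strict)
qed

lemma sum_periodic_shift:
  fixes F :: "int \<Rightarrow> 'a::cancel_comm_monoid_add"
  assumes periodic: "\<And>l. F (l + int n) = F l"
  shows "(\<Sum>i<n. F (a + int i)) = (\<Sum>i<n. F (int i))"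
proof -
  define G where "G a = (\<Sum>i<n. F (a + int i))" for a
  have G_succ: "G (a + 1) = G a" for a
  proof -
    have "G (a + 1) + F a = (\<Sum>i<Suc n. F (a + int i))"
      unfolding G_def by (subst sum.lessThan_Suc_shift) (simp add: add_ac)
    also have "\<dots> = G a + F a"
      unfolding G_def by (simp add: periodic)
    finally show ?thesis by simp
  qed
  have "G a = G 0"
    by (induction a rule: int_induct[where k = 0]) (simp_all add: G_succ flip: G_succ[of "_ - 1"])
  then show ?thesis unfolding G_def by simp
qed

lemma card_dvd_double_le_2: "card {h::nat. h < n \<and> n dvd 2 * h} \<le> 2"
proof -
  have "{h. h < n \<and> n dvd 2 * h} \<subseteq> {0, n div 2}"
  proof
    fix h assume "h \<in> {h. h < n \<and> n dvd 2 * h}"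
    then obtain k where k: "2 * h = n * k" and "h < n" by (auto elim: dvdE)
    then have "k < 2"
      by (metis mult_less_cancel1 mult.commute mult_2 add_less_mono nat_mult_less_cancel_disj)
    then have "k = 0 \<or> k = 1" by auto
    then show "h \<in> {0, n div 2}" using k by auto
  qed
  then have "card {h. h < n \<and> n dvd 2 * h} \<le> card {0, n div 2}"
    by (rule card_mono[rotated]) simp
  also have "\<dots> \<le> 2" by (simp add: card_insert_if)
  finally show ?thesis .
qed

lemma norm_gauss_S_le:
  assumes "q \<ge> 1" and "coprime p q"
  shows "norm (gauss_S p q (of_int m / of_int q)) \<le> sqrt (2 * of_int q)"
proof -
  define n where "n = nat q"
  have q_eq: "q = int n" and n_pos: "n > 0" using assms(1) unfolding n_def by simp_all
  define F where "F l = e2pi (real_of_int p / q * (of_int l)\<^sup>2 + of_int m / q * of_int l)"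
    for l :: int
  have F_periodic: "F (l + int n) = F l" for l
  proof -
    have "real_of_int p / q * (of_int (l + q))\<^sup>2 + of_int m / of_int q * of_int (l + q)
        = of_int p / of_int q * (of_int l)\<^sup>2 + of_int m / of_int q * of_int l
          + of_int (2 * p * l + p * q + m)"
      using n_pos by (simp add: q_eq field_simps power2_eq_square)
    then show ?thesis unfolding F_def q_eq[symmetric] by (simp only: e2pi_add e2pi_of_int mult_1_right)
  qed
  define S where "S = (\<Sum>i<n. F (int i))"
  have shift: "(\<Sum>i<n. F (a + int i)) = S" for a
    unfolding S_def by (rule sum_periodic_shift[where F = F, OF F_periodic])
  have "gauss_S p q (of_int m / of_int q) = (\<Sum>i<n. F (1 + int i))"
    unfolding gauss_S_def F_def e2pi_def
    by (rule sum.reindex_bij_witness[of _ "\<lambda>i. 1 + int i" "\<lambda>l. nat (l - 1)"]) (auto simp: q_eq)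
  then have gauss_eq: "gauss_S p q (of_int m / of_int q) = S" by (simp add: shift)
  have F_corr: "cnj (F (int j)) * F (int j + int h)
      = e2pi ((of_int p * (real h)\<^sup>2 + of_int m * real h) / q) * e2pi (real j * (of_int (2 * p * int h) / n))"
    for j h
    unfolding F_def cnj_e2pi e2pi_add[symmetric]
    using n_pos by (intro arg_cong[where f = e2pi]) (simp add: q_eq field_simps power2_eq_square)
  have "cnj S = (\<Sum>j<n. cnj (F (int j)))"
    unfolding S_def by (rule cnj_sum)
  then have "S * cnj S = (\<Sum>j<n. cnj (F (int j)) * S)"
    by (simp add: sum_distrib_left mult.commute)
  also have "\<dots> = (\<Sum>j<n. \<Sum>h<n. cnj (F (int j)) * F (int j + int h))"
  proof (rule sum.cong[OF refl])
    fix j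
    show "cnj (F (int j)) * S = (\<Sum>h<n. cnj (F (int j)) * F (int j + int h))"
      by (simp add: sum_distrib_left flip: shift[of "int j"])
  qed
  also have "\<dots> = (\<Sum>h<n. e2pi ((of_int p * (real h)\<^sup>2 + of_int m * real h) / q)
                      * (\<Sum>j<n. e2pi (real j * (of_int (2 * p * int h) / n))))"
    by (subst sum.swap) (simp add: F_corr sum_distrib_left)
  finally have S_sq: "S * cnj S = \<dots>" .
  have "(norm S)\<^sup>2 = norm (S * cnj S)"
    by (simp add: norm_mult power2_eq_square)
  also have "\<dots> \<le> (\<Sum>h<n. norm (\<Sum>j<n. e2pi (real j * (of_int (2 * p * int h) / n))))"
    unfolding S_sq by (rule order_trans[OF norm_sum]) (simp add: norm_mult)
  also have "\<dots> = (\<Sum>h<n. if n dvd 2 * h then real n else 0)"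
  proof (rule sum.cong[OF refl])
    fix h
    have "int n dvd p * (2 * int h) \<longleftrightarrow> int n dvd 2 * int h"
      using assms(2) by (simp add: q_eq coprime_commute coprime_dvd_mult_right_iff)
    also have "\<dots> \<longleftrightarrow> n dvd 2 * h"
      using of_nat_dvd_iff[of n "2 * h", where 'a = int] by simp
    finally have "int n dvd 2 * p * int h \<longleftrightarrow> n dvd 2 * h" by (simp add: mult_ac)
    then show "norm (\<Sum>j<n. e2pi (real j * (of_int (2 * p * int h) / n)))
        = (if n dvd 2 * h then real n else 0)"
      unfolding sum_e2pi_linear[OF n_pos] by simp
  qed
  also have "\<dots> = real n * card {h. h < n \<and> n dvd 2 * h}"
    by (simp add: sum.If_cases lessThan_def Collect_conj_eq Int_commute)
  also have "\<dots> \<le> real n * 2"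
    using card_dvd_double_le_2[of n] by (intro mult_left_mono) simp_all
  finally show ?thesis
    using gauss_eq by (simp add: q_eq real_le_rsqrt)
qed

lemma exp_abs_int_has_sum:
  fixes B :: real
  assumes "B > 0"
  shows "((\<lambda>k::int. exp (- B * \<bar>of_int k\<bar>)) has_sum 2 * (exp (- B) / (1 - exp (- B)))) (UNIV - {0})"
proof -
  define H where "H k = exp (- B * \<bar>of_int k\<bar>)" for k :: int
  have geom: "((\<lambda>n. exp (- B) ^ n) has_sum exp (- B) / (1 - exp (- B))) {1::nat..}"
    by (rule has_sum_geometric_from_1) (use assms in simp)
  have "H (int n) = exp (- B) ^ n" "H (- int n) = exp (- B) ^ n" for n
    unfolding H_def by (simp_all add: exp_of_nat_mult[symmetric] mult_ac)
  then have "(H has_sum exp (- B) / (1 - exp (- B))) (int ` {1..})"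
    and "(H has_sum exp (- B) / (1 - exp (- B))) ((\<lambda>n. - int n) ` {1..})"
    using geom by (simp_all add: has_sum_reindex inj_on_def o_def)
  then have "(H has_sum 2 * (exp (- B) / (1 - exp (- B)))) (int ` {1..} \<union> (\<lambda>n. - int n) ` {1..})"
    by (subst mult_2, intro has_sum_Un_disjoint) auto
  moreover have "int ` {1..} \<union> (\<lambda>n. - int n) ` {1..} = UNIV - {0}"
    by (auto simp: image_iff)
      (metis Suc_leI atLeast_iff gr0I int_cases int_ops(1) neg_int_cases negative_zless_0)
  ultimately show ?thesis unfolding H_def by simp
qed

lemma exp_neg_div_one_minus_exp_neg_le:
  fixes B :: real
  assumes "B > 0"
  shows "exp (- B) / (1 - exp (- B)) \<le> 1 / B"
proof -
  have "exp (- B) / (1 - exp (- B)) = 1 / (exp B - 1)"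
    using assms by (simp add: exp_minus field_simps)
  moreover have "B \<le> exp B - 1"
    using exp_ge_add_one_self[of B] by linarith
  ultimately show ?thesis
    using assms by (simp add: frac_le)
qed

lemma exp_abs_int_affine_summable_on:
  fixes B :: real and a b :: int
  assumes "B > 0" and "a \<noteq> 0"
  shows "(\<lambda>m. exp (- B * \<bar>of_int (m * a - b)\<bar>)) summable_on A"
proof -
  define H where "H k = exp (- B * \<bar>of_int k\<bar>)" for k :: int
  have "H summable_on insert 0 (UNIV - {0})"
    using exp_abs_int_has_sum[OF assms(1)] unfolding H_def summable_on_insert_iff
    by (auto simp: summable_on_def)
  then have "H summable_on (\<lambda>m. m * a - b) ` A"
    by (rule summable_on_subset_banach) auto
  moreover have "inj_on (\<lambda>m. m * a - b) A"
    using assms(2) by (auto simp: inj_on_def)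
  ultimately show ?thesis
    by (simp add: summable_on_reindex o_def H_def)
qed

lemma Re_mult_of_real: "Re (w * complex_of_real r) = Re w * r"
  by (simp add: complex_of_real_def)

lemma abs_of_int_le_power2: "\<bar>of_int k\<bar> \<le> (of_int k :: real)\<^sup>2"
proof (cases "k = 0")
  case False
  then have "1 \<le> \<bar>of_int k :: real\<bar>" by linarith
  then have "\<bar>of_int k\<bar> * 1 \<le> \<bar>of_int k :: real\<bar> * \<bar>of_int k\<bar>"
    by (intro mult_left_mono) auto
  then show ?thesis
    by (simp add: power2_eq_square abs_mult_self_eq)
qed simp

definition theta_decay :: "nat \<Rightarrow> int \<Rightarrow> complex \<Rightarrow> real" where
  "theta_decay N q z = pi * Re z / (real_of_int q * real N * norm z)\<^sup>2"

definition theta_term :: "nat \<Rightarrow> int \<Rightarrow> int \<Rightarrow> complex \<Rightarrow> int \<Rightarrow> complex" where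
  "theta_term N p q z m = gauss_S p q (of_int m / of_int q) *
     exp (- (complex_of_real pi / z) * complex_of_real ((of_int m / of_int q - 1 / real N)\<^sup>2))"

lemma theta_decay_pos: "N > 0 \<Longrightarrow> q \<ge> 1 \<Longrightarrow> Re z > 0 \<Longrightarrow> theta_decay N q z > 0"
  unfolding theta_decay_def by (auto simp: complex_eq_iff)

lemma norm_theta_term_le:
  assumes "N > 0" and "q \<ge> 1" and "coprime p q" and "Re z \<ge> 0"
  shows "norm (theta_term N p q z m)
    \<le> sqrt (2 * of_int q) * exp (- theta_decay N q z * \<bar>of_int (m * int N - q)\<bar>)"
proof -
  define B where "B = theta_decay N q z"
  define k where "k = m * int N - q"
  define t where "t = of_int m / of_int q - 1 / real N"
  have "B \<ge> 0"
    unfolding B_def theta_decay_def using assms(4) by simp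
  have "t = of_int k / (real_of_int q * real N)"
    using assms(1,2) by (simp add: t_def k_def field_simps)
  moreover have "Re (complex_of_real pi / z) = pi * Re z / (norm z)\<^sup>2"
    by (simp add: Re_divide cmod_power2 mult.commute)
  ultimately have "norm (exp (- (complex_of_real pi / z) * complex_of_real (t\<^sup>2)))
      = exp (- (pi * Re z / (norm z)\<^sup>2) * (of_int k / (real_of_int q * real N))\<^sup>2)"
    unfolding norm_exp_eq_Re Re_mult_of_real by simp
  also have "\<dots> = exp (- B * (of_int k)\<^sup>2)"
    by (simp add: B_def theta_decay_def power_divide power_mult_distrib)
  also have "\<dots> \<le> exp (- B * \<bar>of_int k\<bar>)"
    using abs_of_int_le_power2[of k] \<open>B \<ge> 0\<close> by (simp add: mult_left_mono)
  finally show ?thesis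
    unfolding theta_term_def norm_mult B_def k_def t_def
    by (rule mult_mono[OF norm_gauss_S_le[OF assms(2,3)]]) (use assms(2) in simp_all)
qed

lemma theta_term_abs_summable_on:
  assumes "N > 0" and "q \<ge> 1" and "coprime p q" and "Re z > 0"
  shows "(\<lambda>m. norm (theta_term N p q z m)) summable_on A"
proof (rule Infinite_Sum.abs_summable_on_comparison_test')
  show "(\<lambda>m. sqrt (2 * of_int q) * exp (- theta_decay N q z * \<bar>of_int (m * int N - q)\<bar>)) summable_on A"
    using assms theta_decay_pos
    by (intro summable_on_cmult_right exp_abs_int_affine_summable_on) auto
qed (use assms in \<open>intro norm_theta_term_le; auto\<close>)

lemma norm_infsum_theta_term_le:
  assumes "N > 0" and "q \<ge> 1" and "coprime p q" and "Re z > 0"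
    and "\<And>m. m \<in> A \<Longrightarrow> m * int N \<noteq> q"
  shows "norm (infsum (theta_term N p q z) A) \<le> sqrt (2 * of_int q) * (2 / theta_decay N q z)"
proof -
  define B where "B = theta_decay N q z"
  define H where "H k = exp (- B * \<bar>of_int k\<bar>)" for k :: int
  define shift where "shift m = m * int N - q" for m
  have "B > 0"
    unfolding B_def using assms(1,2,4) by (rule theta_decay_pos)
  have H_sum: "(H has_sum 2 * (exp (- B) / (1 - exp (- B)))) (UNIV - {0})"
    unfolding H_def using \<open>B > 0\<close> by (rule exp_abs_int_has_sum)
  have H_summable: "H summable_on UNIV - {0}"
    using H_sum by (rule has_sum_imp_summable)
  have shift_A: "shift ` A \<subseteq> UNIV - {0}" and "inj_on shift A"
    using assms(1,5) by (auto simp: shift_def inj_on_def)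
  have "norm (infsum (theta_term N p q z) A) \<le> infsum (\<lambda>m. norm (theta_term N p q z m)) A"
    by (rule norm_infsum_bound[OF theta_term_abs_summable_on[OF assms(1-4)]])
  also have "\<dots> \<le> infsum (\<lambda>m. sqrt (2 * of_int q) * H (shift m)) A"
    using assms \<open>B > 0\<close> unfolding H_def shift_def B_def
    by (intro infsum_mono theta_term_abs_summable_on norm_theta_term_le summable_on_cmult_right
        exp_abs_int_affine_summable_on) auto
  also have "\<dots> = sqrt (2 * of_int q) * infsum H (shift ` A)"
    by (simp add: infsum_cmult_right' infsum_reindex[OF \<open>inj_on shift A\<close>] o_def)
  also have "\<dots> \<le> sqrt (2 * of_int q) * infsum H (UNIV - {0})"
    using summable_on_subset_banach[OF H_summable shift_A] H_summable shift_A assms(2)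
    by (intro mult_left_mono infsum_mono_neutral) (auto simp: H_def)
  also have "\<dots> \<le> sqrt (2 * of_int q) * (2 / B)"
    unfolding infsumI[OF H_sum] using exp_neg_div_one_minus_exp_neg_le[OF \<open>B > 0\<close>] assms(2)
    by (intro mult_left_mono) auto
  finally show ?thesis
    unfolding B_def .
qed

lemma theta_tail_prefactor_le:
  fixes q r y K c :: real
  assumes "q > 0" and "r > 0" and "y > 0" and "q * r \<le> K * y powr (1/2)"
  shows "sqrt (2 * q) * (2 * (q * c * r)\<^sup>2 / (pi * y)) / (q * sqrt r)
    \<le> 2 * sqrt 2 * c\<^sup>2 / pi * K * sqrt K * y powr (-1/4)"
proof -
  have "sqrt (2 * q) * (2 * (q * c * r)\<^sup>2 / (pi * y)) / (q * sqrt r)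
      = 2 * sqrt 2 * c\<^sup>2 / pi * (q * r * sqrt (q * r)) / y"
  proof -
    have "sqrt q ^ 2 = q" "sqrt r ^ 2 = r" using assms by simp_all
    then show ?thesis using assms
      by (simp add: real_sqrt_mult field_simps power2_eq_square)
  qed
  also have "\<dots> \<le> 2 * sqrt 2 * c\<^sup>2 / pi * (K * y powr (1/2) * sqrt (K * y powr (1/2))) / y"
  proof -
    have "0 < q * r"
      using assms by simp
    then have "q * r * sqrt (q * r) \<le> K * y powr (1/2) * sqrt (K * y powr (1/2))"
      using assms(4) by (intro mult_mono[OF _ real_sqrt_le_mono]) auto
    then show ?thesis
      using assms(3) by (intro divide_right_mono mult_left_mono) auto
  qed
  also have "\<dots> = 2 * sqrt 2 * c\<^sup>2 / pi * K * sqrt K * (y powr (1/2) * sqrt (y powr (1/2)) / y)"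
    by (simp add: real_sqrt_mult mult_ac)
  also have "y powr (1/2) * sqrt (y powr (1/2)) / y = y powr (-1/4)"
  proof -
    have "sqrt (y powr (1/2)) = y powr (1/4)"
      using assms(3) by (simp add: powr_half_sqrt[symmetric] powr_powr)
    moreover have "y powr (1/2) * y powr (1/4) / y powr 1 = y powr (-1/4)"
      by (simp only: powr_add[symmetric] powr_diff[symmetric]) simp
    ultimately show ?thesis
      using assms(3) by simp
  qed
  finally show ?thesis .
qed

lemma of_int_mult_norm_le:
  fixes y \<delta> C1 C2 :: real and q :: int
  assumes "y > 0" and "q \<ge> 0"
    and "of_int q \<le> C1 * y powr (-1/2)" and "of_int q * \<bar>\<delta>\<bar> \<le> C2 * y powr (1/2)"
  shows "of_int q * norm (complex_of_real y + 2 * \<i> * complex_of_real \<delta>) \<le> (C1 + 2 * C2) * y powr (1/2)"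
proof -
  have "norm (complex_of_real y + 2 * \<i> * complex_of_real \<delta>) \<le> y + 2 * \<bar>\<delta>\<bar>"
    using norm_triangle_ineq[of "complex_of_real y" "2 * \<i> * complex_of_real \<delta>"] assms(1)
    by (simp add: norm_mult)
  moreover have "0 \<le> real_of_int q"
    using assms(2) by simp
  ultimately have "of_int q * norm (complex_of_real y + 2 * \<i> * complex_of_real \<delta>)
      \<le> of_int q * (y + 2 * \<bar>\<delta>\<bar>)"
    by (rule mult_left_mono)
  also have "\<dots> = of_int q * y + 2 * (of_int q * \<bar>\<delta>\<bar>)"
    by (simp add: algebra_simps)
  also have "of_int q * y \<le> C1 * y powr (-1/2) * y powr 1"
    using assms(1,3) by (simp add: mult_right_mono)
  also have "C1 * y powr (-1/2) * y powr 1 = C1 * y powr (1/2)"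
    by (simp only: mult.assoc powr_add[symmetric]) simp
  finally show ?thesis
    using assms(4) by (simp add: algebra_simps)
qed

lemma norm_theta_tail_le:
  assumes "N > 0" and "q \<ge> 1" and "coprime p q" and "Re z > 0"
    and "of_int q * norm z \<le> K * Re z powr (1/2)"
    and "\<And>m. m \<in> A \<Longrightarrow> m * int N \<noteq> q"
  shows "norm (infsum (theta_term N p q z) A / (of_int q * csqrt z))
    \<le> 2 * sqrt 2 * (real N)\<^sup>2 / pi * K * sqrt K * Re z powr (-1/4)"
proof -
  have "z \<noteq> 0"
    using assms(4) by auto
  have "norm (infsum (theta_term N p q z) A / (of_int q * csqrt z))
      = norm (infsum (theta_term N p q z) A) / (of_int q * sqrt (norm z))"
    using assms(2) by (simp add: norm_divide norm_mult)
  also have "\<dots> \<le> sqrt (2 * of_int q) * (2 / theta_decay N q z) / (of_int q * sqrt (norm z))"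
    using assms by (intro divide_right_mono norm_infsum_theta_term_le) auto
  also have "\<dots> = sqrt (2 * of_int q) * (2 * (of_int q * real N * norm z)\<^sup>2 / (pi * Re z))
      / (of_int q * sqrt (norm z))"
    by (simp add: theta_decay_def)
  also have "\<dots> \<le> 2 * sqrt 2 * (real N)\<^sup>2 / pi * K * sqrt K * Re z powr (-1/4)"
    using assms(2,4,5) \<open>z \<noteq> 0\<close> by (intro theta_tail_prefactor_le) auto
  finally show ?thesis .
qed

lemma T_y_eq_infsum_theta_term:
  "T_y N y p q \<delta> = infsum (theta_term N p q (complex_of_real y + 2 * \<i> * complex_of_real \<delta>)) UNIV
      / (of_int q * csqrt (complex_of_real y + 2 * \<i> * complex_of_real \<delta>))"
  unfolding T_y_def theta_term_def[abs_def] by simp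

lemma theta_term_center:
  assumes "N > 0" and "q \<noteq> 0" and "q = int N * m"
  shows "theta_term N p q z m = gauss_S p q (1 / real N)"
proof -
  have "real_of_int m / real_of_int q = 1 / real N"
    using assms by (cases "m = 0") auto
  then show ?thesis
    by (simp add: theta_term_def)
qed

lemma T_y_bound:
  fixes N :: nat and y \<delta> C1 C2 :: real and p q :: int
  defines "z \<equiv> complex_of_real y + 2 * \<i> * complex_of_real \<delta>"
    and "C \<equiv> 2 * sqrt 2 * (real N)\<^sup>2 / pi * (C1 + 2 * C2) * sqrt (C1 + 2 * C2)"
  assumes "N > 0" and "y > 0" and "q \<ge> 1" and "coprime p q"
    and "of_int q \<le> C1 * y powr (-1/2)" and "of_int q * \<bar>\<delta>\<bar> \<le> C2 * y powr (1/2)"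
  shows T_y_minus_center_le:
      "int N dvd q \<Longrightarrow> norm (T_y N y p q \<delta> - gauss_S p q (1 / real N) / (of_int q * csqrt z))
        \<le> C * y powr (-1/4)"
    and norm_T_y_le: "\<not> int N dvd q \<Longrightarrow> norm (T_y N y p q \<delta>) \<le> C * y powr (-1/4)"
proof -
  have "Re z = y"
    by (simp add: z_def)
  have tail: "norm (infsum (theta_term N p q z) A / (of_int q * csqrt z)) \<le> C * y powr (-1/4)"
    if "\<And>m. m \<in> A \<Longrightarrow> m * int N \<noteq> q" for A
  proof -
    have "of_int q * norm z \<le> (C1 + 2 * C2) * Re z powr (1/2)"
      using of_int_mult_norm_le[OF assms(4) _ assms(7,8)] assms(5) \<open>Re z = y\<close> by (simp add: z_def)
    then show ?thesis
      using norm_theta_tail_le[of N q p z "C1 + 2 * C2" A] assms(3-6) that \<open>Re z = y\<close>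
      by (simp add: C_def)
  qed
  have T_eq: "T_y N y p q \<delta> = infsum (theta_term N p q z) UNIV / (of_int q * csqrt z)"
    unfolding z_def by (rule T_y_eq_infsum_theta_term)
  show "norm (T_y N y p q \<delta>) \<le> C * y powr (-1/4)" if "\<not> int N dvd q"
    unfolding T_eq using that by (intro tail) (auto simp: mult.commute)
  show "norm (T_y N y p q \<delta> - gauss_S p q (1 / real N) / (of_int q * csqrt z)) \<le> C * y powr (-1/4)"
    if "int N dvd q"
  proof -
    from that obtain m0 where m0: "q = int N * m0"
      by (elim dvdE)
    have "theta_term N p q z summable_on UNIV - {m0}"
      using assms(3-6) \<open>Re z = y\<close>
      by (intro abs_summable_summable[OF theta_term_abs_summable_on]) auto
    then have "infsum (theta_term N p q z) UNIV
        = gauss_S p q (1 / real N) + infsum (theta_term N p q z) (UNIV - {m0})"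
      using infsum_insert[of "theta_term N p q z" "UNIV - {m0}" m0]
        theta_term_center[OF assms(3) _ m0] assms(5)
      by (simp add: insert_absorb)
    then have "T_y N y p q \<delta> - gauss_S p q (1 / real N) / (of_int q * csqrt z)
        = infsum (theta_term N p q z) (UNIV - {m0}) / (of_int q * csqrt z)"
      unfolding T_eq by (simp add: add_divide_distrib)
    also have "norm \<dots> \<le> C * y powr (-1/4)"
      using assms(3) m0 by (intro tail) auto
    finally show ?thesis .
  qed
qed

theorem lemma1:
  fixes N :: nat and C1 C2 :: real
  assumes "N > 1" and "C1 > 0" and "C2 > 0"
  shows "\<exists>C::real. \<forall>y p q \<delta>.
     0 < y \<and> y \<le> 1 \<and> q \<ge> 1 \<and> coprime p q \<and>
     0 < real_of_int p / real_of_int q \<and> real_of_int p / real_of_int q \<le> 1 \<and>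
     real_of_int q \<le> C1 * y powr (-1/2) \<and> real_of_int q * \<bar>\<delta>\<bar> \<le> C2 * y powr (1/2) \<longrightarrow>
     (int N dvd q \<longrightarrow>
        cmod (T_y N y p q \<delta> - gauss_S p q (1 / real N) /
          (of_int q * csqrt (complex_of_real y + 2 * \<i> * complex_of_real \<delta>))) \<le> C * y powr (-1/4)) \<and>
     (\<not> int N dvd q \<longrightarrow> cmod (T_y N y p q \<delta>) \<le> C * y powr (-1/4))"
  using assms(1)
  by (intro exI[of _ "2 * sqrt 2 * (real N)\<^sup>2 / pi * (C1 + 2 * C2) * sqrt (C1 + 2 * C2)"]
      allI impI conjI; elim conjE)
    (rule T_y_minus_center_le norm_T_y_le; auto)+

end
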